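(* Let $k\ge 1$, let $z_1,\dots,z_k\in\mathbb{C}$ be pairwise distinct with $|z_j|\le 1$ and $z_j\neq 1$ for $j=1,\dots,k$, and let $n\ge 1$ and $n_1,\dots,n_k\ge 1$ be integers. Let $$p(z)=(z-1)^n\prod_{j=1}^{k}(z-z_j)^{n_j},\quad z\in\mathbb{C},$$ and set $m=n+\sum_{j=1}^k n_j$. Then there exists $\zeta\neq 1$ such that $p'(\zeta)=0$ and $$\Big|\zeta-\frac{m-n}{m+(k-1)n}\Big|\le \frac{kn}{m+(k-1)n}.$$ *)

theory Defs
  imports "HOL-Analysis.Analysis"
begin

end

theory Submission
  imports Defs "HOL-Computational_Algebra.Fundamental_Theorem_Algebra"
begin

(* Away from the zeros of p, the critical points of p are the roots of the polynomial
   G = (X - 1) * prod_j (X - z_j) * p'/p, which has degree at most k and does not vanish at 1.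
   Over the roots r_i of G, G'(1)/G(1) = sum_i 1/(1 - r_i); computed from the formula for G it
   equals sum_j (1 + n_j/n)/(1 - z_j), and as Re (1/(1 - z)) >= 1/2 on the closed unit disc,
   its real part is at least (m + (k - 1) n)/(2n).  So some root r has
   Re (1/(1 - r)) >= 1/(2R) with R = k n/(m + (k - 1) n), and inversion maps this half-plane
   onto the disc |v - R| <= R; with v = 1 - r this is the claimed disc around 1 - R. *)

definition logderiv_numerator :: "'b set \<Rightarrow> ('b \<Rightarrow> 'a::field) \<Rightarrow> ('b \<Rightarrow> nat) \<Rightarrow> 'a poly" where
  "logderiv_numerator A a e = (\<Sum>j\<in>A. smult (of_nat (e j)) (\<Prod>i\<in>A-{j}. [:-a i, 1:]))"

lemma poly_logderiv_numerator:
  assumes "finite A" "x \<notin> a ` A"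
  shows "poly (logderiv_numerator A a e) x =
           (\<Prod>i\<in>A. x - a i) * (\<Sum>j\<in>A. of_nat (e j) / (x - a j))"
proof -
  have nonzero: "x - a j \<noteq> 0" if "j \<in> A" for j
    using assms(2) that by auto
  have "poly (logderiv_numerator A a e) x = (\<Sum>j\<in>A. of_nat (e j) * (\<Prod>i\<in>A-{j}. x - a i))"
    by (simp add: logderiv_numerator_def poly_sum poly_prod)
  also have "\<dots> = (\<Sum>j\<in>A. of_nat (e j) * ((\<Prod>i\<in>A. x - a i) / (x - a j)))"
    using assms(1) nonzero by (intro sum.cong refl arg_cong2[where f = "(*)"]) (simp add: prod_diff1)
  finally show ?thesis
    by (simp add: sum_distrib_left mult.commute)
qed

lemma poly_logderiv_numerator_node:
  assumes "finite A" "inj_on a A" "j \<in> A"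
  shows "poly (logderiv_numerator A a e) (a j) = of_nat (e j) * (\<Prod>i\<in>A-{j}. a j - a i)"
proof -
  have "(\<Prod>i\<in>A-{l}. a j - a i) = 0" if "l \<in> A - {j}" for l
    using assms that by (auto simp: prod_zero_iff)
  then have "(\<Sum>l\<in>A. of_nat (e l) * (\<Prod>i\<in>A-{l}. a j - a i)) =
             (\<Sum>l\<in>{j}. of_nat (e l) * (\<Prod>i\<in>A-{l}. a j - a i))"
    using assms by (intro sum.mono_neutral_right) auto
  then show ?thesis
    by (simp add: logderiv_numerator_def poly_sum poly_prod)
qed

lemma degree_logderiv_numerator:
  assumes "finite A"
  shows "degree (logderiv_numerator A a e) \<le> card A - 1"
  unfolding logderiv_numerator_def
proof (rule degree_sum_le[OF assms])
  fix j assume "j \<in> A"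
  have "degree (\<Prod>i\<in>A-{j}. [:-a i, 1:]) \<le> (\<Sum>i\<in>A-{j}. degree [:-a i, 1:])"
    by (rule degree_prod_sum_le[unfolded o_def]) (use assms in auto)
  also have "\<dots> = card A - 1"
    using \<open>j \<in> A\<close> assms by simp
  finally show "degree (smult (of_nat (e j)) (\<Prod>i\<in>A-{j}. [:-a i, 1:])) \<le> card A - 1"
    using degree_smult_le order_trans by blast
qed

lemma pderiv_prod_linear:
  "pderiv (\<Prod>i\<in>A. [:-a i, 1:]) = logderiv_numerator A a (\<lambda>_. 1)"
  by (simp add: pderiv_prod pderiv_pCons logderiv_numerator_def)

lemma poly_pderiv_prod_linear:
  fixes a :: "'b \<Rightarrow> 'a::field"
  assumes "finite A" "x \<notin> a ` A"
  shows "poly (pderiv (\<Prod>i\<in>A. [:-a i, 1:])) x = (\<Prod>i\<in>A. x - a i) * (\<Sum>i\<in>A. 1 / (x - a i))"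
  using poly_logderiv_numerator[OF assms, of "\<lambda>_. 1"] by (simp add: pderiv_prod_linear)

lemma complex_poly_logderiv_eq_sum_roots:
  fixes G :: "complex poly"
  assumes "poly G x \<noteq> 0"
  obtains r where "\<And>i. i < degree G \<Longrightarrow> poly G (r i) = 0"
    and "poly (pderiv G) x / poly G x = (\<Sum>i<degree G. 1 / (x - r i))"
proof -
  obtain r where G: "smult (lead_coeff G) (\<Prod>i<degree G. [:-r i, 1:]) = G"
    using complex_poly_decompose' by blast
  have poly_G: "poly G y = lead_coeff G * (\<Prod>i<degree G. y - r i)" for y
    by (subst G[symmetric]) (simp add: poly_prod)
  have "x \<noteq> r i" if "i < degree G" for i
    using assms that by (auto simp: poly_G)
  then have "poly (pderiv G) x = lead_coeff G * ((\<Prod>i<degree G. x - r i) * (\<Sum>i<degree G. 1 / (x - r i)))"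
    by (subst G[symmetric], simp only: pderiv_smult poly_smult, subst poly_pderiv_prod_linear) auto
  moreover have "poly G (r i) = 0" if "i < degree G" for i
    using that by (auto simp: poly_G)
  ultimately show thesis
    using assms by (intro that) (auto simp: poly_G)
qed

lemma Re_inverse_ge_iff_norm_le:
  fixes v :: complex
  assumes "v \<noteq> 0" "R > 0"
  shows "1 / (2 * R) \<le> Re (1 / v) \<longleftrightarrow> norm (v - of_real R) \<le> R"
proof -
  have pos: "(Re v)\<^sup>2 + (Im v)\<^sup>2 > 0"
    using assms(1) by (simp add: sum_power2_gt_zero_iff complex_eq_iff)
  have "1 / (2 * R) \<le> Re (1 / v) \<longleftrightarrow> (Re v)\<^sup>2 + (Im v)\<^sup>2 \<le> 2 * R * Re v"
    using pos assms(2) by (simp add: Re_divide power2_eq_square field_simps)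
  also have "\<dots> \<longleftrightarrow> (Re v - R)\<^sup>2 + (Im v)\<^sup>2 \<le> R\<^sup>2"
    by (simp add: power2_eq_square algebra_simps)
  also have "\<dots> \<longleftrightarrow> (norm (v - of_real R))\<^sup>2 \<le> R\<^sup>2"
    by (simp only: cmod_power2 minus_complex.sel Re_complex_of_real Im_complex_of_real diff_zero)
  also have "\<dots> \<longleftrightarrow> norm (v - of_real R) \<le> R"
    using assms(2) by (simp add: power2_le_iff_abs_le)
  finally show ?thesis .
qed

definition critical_poly :: "nat \<Rightarrow> 'b set \<Rightarrow> ('b \<Rightarrow> 'a::field) \<Rightarrow> ('b \<Rightarrow> nat) \<Rightarrow> 'a poly" where
  "critical_poly n A a e =
     smult (of_nat n) (\<Prod>i\<in>A. [:-a i, 1:]) + [:-1, 1:] * logderiv_numerator A a e"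

lemma poly_critical_poly:
  assumes "finite A" "x \<notin> a ` A"
  shows "poly (critical_poly n A a e) x =
           (\<Prod>i\<in>A. x - a i) * (of_nat n + (x - 1) * (\<Sum>j\<in>A. of_nat (e j) / (x - a j)))"
  using assms by (simp add: critical_poly_def poly_prod poly_logderiv_numerator algebra_simps)

lemma poly_critical_poly_one:
  "poly (critical_poly n A a e) 1 = of_nat n * (\<Prod>i\<in>A. 1 - a i)"
  by (simp add: critical_poly_def poly_prod)

lemma poly_critical_poly_node:
  assumes "finite A" "inj_on a A" "j \<in> A"
  shows "poly (critical_poly n A a e) (a j) = (a j - 1) * of_nat (e j) * (\<Prod>i\<in>A-{j}. a j - a i)"
proof -
  have vanish: "(\<Prod>i\<in>A. a j - a i) = 0"
    using assms by (auto simp: prod_zero_iff)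
  show ?thesis
    using assms by (simp add: critical_poly_def poly_prod poly_logderiv_numerator_node vanish
        algebra_simps)
qed

lemma degree_critical_poly:
  fixes a :: "'b \<Rightarrow> 'a::field"
  assumes "finite A"
  shows "degree (critical_poly n A a e) \<le> card A"
proof -
  let ?S = "logderiv_numerator A a e"
  have "degree (\<Prod>i\<in>A. [:-a i, 1:]) \<le> (\<Sum>i\<in>A. degree [:-a i, 1:])"
    by (rule degree_prod_sum_le[OF assms, unfolded o_def])
  then have "degree (smult (of_nat n) (\<Prod>i\<in>A. [:-a i, 1:])) \<le> card A"
    using degree_smult_le order_trans by fastforce
  moreover have "degree ([:-1, 1:] * ?S) \<le> card A"
  proof (cases "A = {}")
    case False
    have "degree ([:-1, 1:] * ?S) \<le> degree [:-1, 1::'a:] + degree ?S"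
      by (rule degree_mult_le)
    moreover have "card A \<ge> 1"
      using False assms by (simp add: Suc_le_eq card_gt_0_iff)
    ultimately show ?thesis
      using degree_logderiv_numerator[OF assms, of a e] by simp
  qed (simp add: logderiv_numerator_def)
  ultimately show ?thesis
    unfolding critical_poly_def using degree_add_le by blast
qed

lemma poly_pderiv_critical_poly_one:
  fixes a :: "'b \<Rightarrow> 'a::field"
  assumes "finite A" "1 \<notin> a ` A"
  shows "poly (pderiv (critical_poly n A a e)) 1 =
           (\<Prod>i\<in>A. 1 - a i) * (\<Sum>j\<in>A. (of_nat n + of_nat (e j)) / (1 - a j))"
proof -
  have pderiv_linear: "pderiv [:-1, 1::'a:] = 1"
    by (simp add: pderiv_pCons)
  have "pderiv (critical_poly n A a e) =
          smult (of_nat n) (pderiv (\<Prod>i\<in>A. [:-a i, 1:])) +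
          ([:-1, 1:] * pderiv (logderiv_numerator A a e) + logderiv_numerator A a e)"
    by (simp only: critical_poly_def pderiv_add pderiv_smult pderiv_mult pderiv_linear mult_1_right)
  then show ?thesis
    using assms by (simp add: poly_pderiv_prod_linear poly_logderiv_numerator
        sum_distrib_left add_divide_distrib sum.distrib distrib_left mult.commute)
qed

lemma has_field_derivative_prod_powers:
  fixes a :: "'b \<Rightarrow> 'a::real_normed_field"
  assumes "\<And>j. j \<in> A \<Longrightarrow> w \<noteq> a j"
  shows "((\<lambda>u. \<Prod>j\<in>A. (u - a j) ^ e j) has_field_derivative
           (\<Prod>j\<in>A. (w - a j) ^ e j) * (\<Sum>j\<in>A. of_nat (e j) / (w - a j))) (at w)"
proof -
  have "((\<lambda>u. \<Prod>j\<in>A. (u - a j) ^ e j) has_field_derivative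
           (\<Prod>j\<in>A. (w - a j) ^ e j) *
           (\<Sum>j\<in>A. of_nat (e j) * (w - a j) ^ (e j - 1) / (w - a j) ^ e j)) (at w)"
    by (rule has_field_derivative_prod') (use assms in \<open>auto intro!: derivative_eq_intros\<close>)
  moreover have "of_nat (e j) * (w - a j) ^ (e j - 1) / (w - a j) ^ e j = of_nat (e j) / (w - a j)"
    if "j \<in> A" for j
    using assms[OF that] by (cases "e j") auto
  ultimately show ?thesis
    by (metis (no_types, lifting) sum.cong)
qed

lemma critical_poly_root_is_critical_point:
  fixes a :: "'b \<Rightarrow> complex"
  assumes "finite A" "inj_on a A" "\<And>j. j \<in> A \<Longrightarrow> a j \<noteq> 1" "\<And>j. j \<in> A \<Longrightarrow> e j \<ge> 1" "n \<ge> 1"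
    and root: "poly (critical_poly n A a e) w = 0"
  shows "w \<noteq> 1" and "deriv (\<lambda>u. (u - 1) ^ n * (\<Prod>j\<in>A. (u - a j) ^ e j)) w = 0"
proof -
  show "w \<noteq> 1"
    using root assms(1,3,5) by (auto simp: poly_critical_poly_one)
  have not_node: "w \<notin> a ` A"
  proof
    assume "w \<in> a ` A"
    then obtain j where "j \<in> A" "w = a j"
      by blast
    moreover have "(\<Prod>i\<in>A-{j}. a j - a i) \<noteq> 0"
      using assms(1,2) \<open>j \<in> A\<close> by (auto simp: inj_on_def)
    ultimately show False
      using root assms(3,4)[OF \<open>j \<in> A\<close>]
      by (simp add: poly_critical_poly_node[OF assms(1,2) \<open>j \<in> A\<close>])
  qed
  define L where "L = of_nat n + (w - 1) * (\<Sum>j\<in>A. of_nat (e j) / (w - a j))"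
  have "(\<Prod>i\<in>A. w - a i) * L = 0"
    using root not_node assms(1) by (simp add: poly_critical_poly L_def)
  moreover have "(\<Prod>i\<in>A. w - a i) \<noteq> 0"
    using assms(1) not_node by force
  ultimately have "L = 0"
    by simp
  define P where "P = (\<lambda>u. \<Prod>j\<in>A. (u - a j) ^ e j)"
  have dP: "(P has_field_derivative P w * (\<Sum>j\<in>A. of_nat (e j) / (w - a j))) (at w)"
    unfolding P_def using not_node by (intro has_field_derivative_prod_powers) force
  have dQ: "((\<lambda>u. (u - 1) ^ n) has_field_derivative of_nat n * (w - 1) ^ (n - 1)) (at w)"
    by (auto intro!: derivative_eq_intros)
  have pow: "(w - 1) ^ n = (w - 1) ^ (n - 1) * (w - 1)"
    using assms(5) by (metis Suc_diff_le diff_Suc_1 power_Suc2)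
  have "of_nat n * (w - 1) ^ (n - 1) * P w + P w * (\<Sum>j\<in>A. of_nat (e j) / (w - a j)) * (w - 1) ^ n =
               (w - 1) ^ (n - 1) * P w * L"
    unfolding L_def pow by (simp add: algebra_simps)
  then have "((\<lambda>u. (u - 1) ^ n * P u) has_field_derivative (w - 1) ^ (n - 1) * P w * L) (at w)"
    using DERIV_mult[OF dQ dP] by simp
  then show "deriv (\<lambda>u. (u - 1) ^ n * (\<Prod>j\<in>A. (u - a j) ^ e j)) w = 0"
    using \<open>L = 0\<close> by (simp add: DERIV_imp_deriv P_def)
qed

lemma Re_logderiv_critical_poly_one_ge:
  fixes a :: "'b \<Rightarrow> complex"
  assumes "finite A" "\<And>j. j \<in> A \<Longrightarrow> norm (a j) \<le> 1" "\<And>j. j \<in> A \<Longrightarrow> a j \<noteq> 1" "n \<ge> 1"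
  shows "(\<Sum>j\<in>A. real n + real (e j)) / (2 * real n) \<le>
           Re (poly (pderiv (critical_poly n A a e)) 1 / poly (critical_poly n A a e) 1)"
proof -
  have "1 \<notin> a ` A" "(\<Prod>i\<in>A. 1 - a i) \<noteq> 0"
    using assms(1,3) by auto
  then have "poly (pderiv (critical_poly n A a e)) 1 / poly (critical_poly n A a e) 1 =
               (\<Sum>j\<in>A. ((real n + real (e j)) / real n) *\<^sub>R (1 / (1 - a j)))"
    using assms(1,4)
    by (simp add: poly_pderiv_critical_poly_one poly_critical_poly_one sum_divide_distrib
        scaleR_conv_of_real mult.commute)
  then have "Re (poly (pderiv (critical_poly n A a e)) 1 / poly (critical_poly n A a e) 1) =
               (\<Sum>j\<in>A. (real n + real (e j)) / real n * Re (1 / (1 - a j)))"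
    by (simp only: Re_sum scaleR_complex.sel)
  also have "\<dots> \<ge> (\<Sum>j\<in>A. (real n + real (e j)) / real n * (1 / 2))"
  proof (intro sum_mono mult_left_mono)
    fix j assume "j \<in> A"
    then show "1 / 2 \<le> Re (1 / (1 - a j))"
      using Re_inverse_ge_iff_norm_le[of "1 - a j" 1] assms(2,3) by simp
  qed simp
  finally show ?thesis
    by (simp add: sum_divide_distrib mult.commute)
qed

lemma exists_ge_div_of_sum_ge:
  fixes f :: "'b \<Rightarrow> real"
  assumes "finite A" "card A \<le> k" "0 < T" "T \<le> sum f A"
  shows "\<exists>i\<in>A. T / real k \<le> f i"
proof (rule ccontr)
  assume "\<not> ?thesis"
  then have less: "f i < T / real k" if "i \<in> A" for i
    using that by auto
  have "A \<noteq> {}"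
    using assms(3,4) by auto
  then have "card A > 0"
    using assms(1) by (simp add: card_gt_0_iff)
  then have "sum f A < real (card A) * (T / real k)"
    using less by (intro sum_bounded_above_strict) auto
  also have "\<dots> \<le> real k * (T / real k)"
    using assms(2,3) by (intro mult_right_mono) auto
  also have "\<dots> = T"
    using \<open>card A > 0\<close> assms(2) by simp
  finally show False
    using assms(4) by simp
qed

lemma exists_critical_poly_root_Re_ge:
  fixes a :: "'b \<Rightarrow> complex"
  assumes "finite A" "A \<noteq> {}" "\<And>j. j \<in> A \<Longrightarrow> norm (a j) \<le> 1" "\<And>j. j \<in> A \<Longrightarrow> a j \<noteq> 1" "n \<ge> 1"
  obtains w where "poly (critical_poly n A a e) w = 0"
    and "(\<Sum>j\<in>A. real n + real (e j)) / (2 * real n * real (card A)) \<le> Re (1 / (1 - w))"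
proof -
  let ?G = "critical_poly n A a e"
  let ?T = "(\<Sum>j\<in>A. real n + real (e j)) / (2 * real n)"
  have "poly ?G 1 \<noteq> 0"
    using assms(1,4,5) by (auto simp: poly_critical_poly_one)
  then obtain r where roots: "\<And>i. i < degree ?G \<Longrightarrow> poly ?G (r i) = 0"
    and logderiv: "poly (pderiv ?G) 1 / poly ?G 1 = (\<Sum>i<degree ?G. 1 / (1 - r i))"
    by (rule complex_poly_logderiv_eq_sum_roots[of ?G 1]) blast
  have "?T \<le> Re (poly (pderiv ?G) 1 / poly ?G 1)"
    by (rule Re_logderiv_critical_poly_one_ge) (use assms in auto)
  then have "?T \<le> (\<Sum>i<degree ?G. Re (1 / (1 - r i)))"
    by (simp add: logderiv Re_sum)
  moreover have "0 < ?T"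
    using assms(1,2,5) by (intro divide_pos_pos sum_pos) auto
  moreover have "card {..<degree ?G} \<le> card A"
    using degree_critical_poly[OF assms(1)] by simp
  ultimately obtain i where "i < degree ?G" "?T / real (card A) \<le> Re (1 / (1 - r i))"
    using exists_ge_div_of_sum_ge[of "{..<degree ?G}" "card A" ?T] by auto
  then show thesis
    using roots by (intro that[of "r i"]) (auto simp: field_simps)
qed

theorem theorem1:
  fixes k n :: nat and z :: "nat \<Rightarrow> complex" and ns :: "nat \<Rightarrow> nat"
    and p :: "complex \<Rightarrow> complex" and m :: nat
  assumes "k \<ge> 1"
    and "inj_on z {1..k}"
    and "\<And>j. j \<in> {1..k} \<Longrightarrow> norm (z j) \<le> 1"
    and "\<And>j. j \<in> {1..k} \<Longrightarrow> z j \<noteq> 1"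
    and "n \<ge> 1"
    and "\<And>j. j \<in> {1..k} \<Longrightarrow> ns j \<ge> 1"
    and "p = (\<lambda>w. (w - 1) ^ n * (\<Prod>j=1..k. (w - z j) ^ ns j))"
    and "m = n + (\<Sum>j=1..k. ns j)"
  shows "\<exists>\<zeta>. \<zeta> \<noteq> 1 \<and> deriv p \<zeta> = 0 \<and>
           norm (\<zeta> - complex_of_real ((real m - real n) / (real m + (real k - 1) * real n)))
             \<le> real k * real n / (real m + (real k - 1) * real n)"
proof -
  define D where "D = real m + (real k - 1) * real n"
  define R where "R = real k * real n / D"
  have "real m \<ge> real n" "(real k - 1) * real n \<ge> 0"
    using assms(1,8) by (auto simp: sum_nonneg)
  then have "D > 0"
    using assms(5) by (simp add: D_def)
  then have "R > 0"
    using assms(1,5) by (simp add: R_def)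
  obtain w where root: "poly (critical_poly n {1..k} z ns) w = 0"
    and Re_ge: "(\<Sum>j=1..k. real n + real (ns j)) / (2 * real n * real k) \<le> Re (1 / (1 - w))"
    using exists_critical_poly_root_Re_ge[where A = "{1..k}" and a = z and n = n and e = ns]
      assms(1,3,4,5) by auto
  have critical: "w \<noteq> 1" "deriv p w = 0"
    using critical_poly_root_is_critical_point[OF _ assms(2,4,6,5) root] assms(7) by auto
  have "(\<Sum>j=1..k. real n + real (ns j)) = D"
    using assms(1,8) by (simp add: D_def sum.distrib algebra_simps of_nat_diff)
  then have "1 / (2 * R) \<le> Re (1 / (1 - w))"
    using Re_ge \<open>D > 0\<close> by (simp add: R_def mult.commute mult.left_commute)
  then have "norm ((1 - w) - of_real R) \<le> R"
    using Re_inverse_ge_iff_norm_le[of "1 - w" R] critical(1) \<open>R > 0\<close> by simp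
  moreover have "(real m - real n) / D = 1 - R"
    using \<open>D > 0\<close> by (simp add: R_def D_def field_simps)
  then have "w - of_real ((real m - real n) / D) = - ((1 - w) - of_real R)"
    by simp
  ultimately have "norm (w - of_real ((real m - real n) / D)) \<le> R"
    by (metis norm_minus_cancel)
  then show ?thesis
    using critical unfolding D_def R_def by blast
qed

end
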